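(* Assume the setting in the context. Let $x_i, x_j, x_{k_1},\dots,x_{k_m}\in X$ be distinct and $K=\{x_{k_1},\dots,x_{k_m}\}$. Suppose that: (i) there exist $G_1,G_2\in\mathcal G$ and $M,N\subseteq X\setminus\{x_i,x_j\}$ with $x_i-G_1(M\cup\{x_j\})\perp\!\!\!\perp x_j-G_2(N)$; (ii) there exist $G_1,G_2\in\mathcal G$ and $M,N\subseteq X\setminus\{x_i,x_j\}$ with $x_i-G_1(M)\perp\!\!\!\perp x_j-G_2(N\cup\{x_i\})$; (a) for every $q=1,\dots,m$: for all $M\subseteq X\setminus\{x_i,x_{k_q}\}$, $N\subseteq X\setminus\{x_j,x_{k_q}\}$ and $G_1,G_2\in\mathcal G$, $x_i-G_1(M)\not\perp\!\!\!\perp x_j-G_2(N)$. Then $(x_i,x_j)$ is a visible non-edge (w.r.t. $X$), and each $x_{k_q}$ is a parent of $x_i$ or a parent of $x_j$.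
   Context: Model: $X$ is a finite set of observed random variables and $U$ a finite set of unobserved random variables; $V=X\cup U$ and $G=(V,E)$ is a DAG on $V$. Each $v_i\in V$ satisfies $v_i=\sum_{x_j\in \mathrm{pa}(v_i)\cap X} f^{(i)}_j(x_j)+\sum_{u_k\in\mathrm{pa}(v_i)\cap U} f^{(i)}_k(u_k)+n_i$, where the $f$'s are nonlinear functions and the external noises $n_i$ are jointly independent. "Parent", "ancestor", "path", "d-separation" refer to $G$ (a path has distinct vertices). Causal Faithfulness Condition (CFC): any conditional independence among variables of $V$ that is not entailed by d-separation in $G$ does not hold. $\perp\!\!\!\perp$ denotes statistical independence, $\not\perp\!\!\!\perp$ dependence. Function class: $\mathcal G$ is a class of generalized additive functions: for $G\in\mathcal G$ and a set $M$ of observed variables, $G(M)=\sum_{x_m\in M} g_m(x_m)$ (with $G(\emptyset)=0$). It satisfies: for any $x_i,x_j\in X$, sets $M,N\subseteq X$, $G_1,G_2\in\mathcal G$ and external noise $n_k$, if $n_k\not\perp\!\!\!\perp x_i-G_1(M)$ and $n_k\not\perp\!\!\!\perp x_j-G_2(N)$ then $x_i-G_1(M)\not\perp\!\!\!\perp x_j-G_2(N)$. Definitions, for $X'\subseteq X$ and $x_i,x_j\in X'$: an unobserved causal path (UCP) from $x_i$ to $x_j$ w.r.t. $X'$ is a directed path $x_i\to\cdots\to v_k\to x_j$ in $G$ with $v_k\notin X'$; an unobserved backdoor path (UBP) between $x_i$ and $x_j$ w.r.t. $X'$ is a path $x_i\leftarrow v_k\leftarrow\cdots\leftarrow v\to\cdots\to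 v_l\to x_j$ with $v_k,v_l\notin X'$ (allowing $v=v_k$, $v=v_l$, or $v=v_k=v_l$; $v$ may be in $X'$). "UBP/UCP between $x_i$ and $x_j$" means a UBP or a UCP in either direction. $x_j$ is a visible parent of $x_i$ w.r.t. $X'$ if $x_j$ is a parent of $x_i$ and there is no UBP/UCP between them w.r.t. $X'$; $(x_i,x_j)$ is a visible non-edge w.r.t. $X'$ if there is no edge between them and no UBP/UCP between them w.r.t. $X'$; $(x_i,x_j)$ is invisible w.r.t. $X'$ if there is a UBP/UCP between them w.r.t. $X'$. When $X'$ is omitted, $X'=X$. Standing facts (taken as known), for $X'\subseteq X$ and distinct $x_i,x_j\in X'$: (F1) $x_j$ is a visible parent of $x_i$ w.r.t. $X'$ iff [for all $G_1,G_2\in\mathcal G$, $M\subseteq X'\setminus\{x_i,x_j\}$, $N\subseteq X'\setminus\{x_j\}$: $x_i-G_1(M)\not\perp\!\!\!\perp x_j-G_2(N)$] and [there exist $G_1,G_2\in\mathcal G$, $M\subseteq X'\setminus\{x_i\}$, $N\subseteq X'\setminus\{x_i,x_j\}$ with $x_i-G_1(M)\perp\!\!\!\perp x_j-G_2(N)$]. (F2) $(x_i,x_j)$ is a visible non-edge w.r.t. $X'$ iff there exist $G_1,G_2\in\mathcal G$ and $M,N\subseteq X'\setminus\{x_i,x_j\}$ with $x_i-G_1(M)\perp\!\!\!\perp x_j-G_2(N)$. (F3) $(x_i,x_j)$ is invisible w.r.t. $X'$ iff for all $M\subseteq X'\setminus\{x_i\}$, $N\subseteq X'\setminus\{x_j\}$,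 $G_1,G_2\in\mathcal G$: $x_i-G_1(M)\not\perp\!\!\!\perp x_j-G_2(N)$. *)

theory Defs
  imports "HOL-Probability.Probability"
begin

text \<open>V is the (finite) vertex set, X the observed
  subset (U = V - X unobserved), E the edge relation ((a,b) in E means a -> b),
  val v is the random variable of vertex v, noise v its external noise, f v p the
  function through which parent p enters vertex v.\<close>

definition nonlinear :: "(real \<Rightarrow> real) \<Rightarrow> bool" where
  "nonlinear h \<longleftrightarrow> \<not> (\<exists>a b. \<forall>t. h t = a * t + b)"

definition anm_model ::
  "'w measure \<Rightarrow> 'v set \<Rightarrow> 'v set \<Rightarrow> ('v \<times> 'v) set \<Rightarrow> ('v \<Rightarrow> 'w \<Rightarrow> real)
    \<Rightarrow> ('v \<Rightarrow> 'w \<Rightarrow> real) \<Rightarrow> ('v \<Rightarrow> 'v \<Rightarrow> real \<Rightarrow> real) \<Rightarrow> bool" where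
  "anm_model M V X E val noise f \<longleftrightarrow>
     prob_space M \<and> finite V \<and> X \<subseteq> V \<and> E \<subseteq> V \<times> V \<and> acyclic E \<and>
     (\<forall>v\<in>V. noise v \<in> borel_measurable M) \<and>
     prob_space.indep_vars M (\<lambda>_. borel) noise V \<and>
     (\<forall>v\<in>V. \<forall>p. (p, v) \<in> E \<longrightarrow> f v p \<in> borel_measurable borel \<and> nonlinear (f v p)) \<and>
     (\<forall>v\<in>V. \<forall>\<omega>\<in>space M. val v \<omega> = (\<Sum>p\<in>{p. (p, v) \<in> E}. f v p (val p \<omega>)) + noise v \<omega>)"

definition rv_indep :: "'w measure \<Rightarrow> ('w \<Rightarrow> real) \<Rightarrow> ('w \<Rightarrow> real) \<Rightarrow> bool" where
  "rv_indep M A B \<longleftrightarrow> prob_space.indep_var M borel A borel B"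

text \<open>An element G of the function class is given by its components g m (m observed);
  G(S) = sum over m in S of g m (x_m).  res val G i S is the residual x_i - G(S).\<close>
definition res :: "('v \<Rightarrow> 'w \<Rightarrow> real) \<Rightarrow> ('v \<Rightarrow> real \<Rightarrow> real) \<Rightarrow> 'v \<Rightarrow> 'v set \<Rightarrow> 'w \<Rightarrow> real" where
  "res val G i S = (\<lambda>\<omega>. val i \<omega> - (\<Sum>m\<in>S. G m (val m \<omega>)))"

definition gclass_ok ::
  "'w measure \<Rightarrow> 'v set \<Rightarrow> 'v set \<Rightarrow> ('v \<Rightarrow> 'w \<Rightarrow> real) \<Rightarrow> ('v \<Rightarrow> 'w \<Rightarrow> real)
    \<Rightarrow> ('v \<Rightarrow> real \<Rightarrow> real) set \<Rightarrow> bool" where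
  "gclass_ok M V X val noise GC \<longleftrightarrow>
     (\<forall>G\<in>GC. \<forall>m. G m \<in> borel_measurable borel) \<and>
     (\<forall>i\<in>X. \<forall>j\<in>X. \<forall>Ms\<subseteq>X. \<forall>Ns\<subseteq>X. \<forall>G1\<in>GC. \<forall>G2\<in>GC. \<forall>k\<in>V.
        \<not> rv_indep M (noise k) (res val G1 i Ms) \<and> \<not> rv_indep M (noise k) (res val G2 j Ns)
        \<longrightarrow> \<not> rv_indep M (res val G1 i Ms) (res val G2 j Ns))"

definition upath :: "('v \<times> 'v) set \<Rightarrow> 'v list \<Rightarrow> bool" where
  "upath E p \<longleftrightarrow> p \<noteq> [] \<and> distinct p \<and>
     (\<forall>k. Suc k < length p \<longrightarrow> (p ! k, p ! Suc k) \<in> E \<or> (p ! Suc k, p ! k) \<in> E)"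

definition dpath :: "('v \<times> 'v) set \<Rightarrow> 'v list \<Rightarrow> bool" where
  "dpath E p \<longleftrightarrow> p \<noteq> [] \<and> distinct p \<and> (\<forall>k. Suc k < length p \<longrightarrow> (p ! k, p ! Suc k) \<in> E)"

definition blocked :: "('v \<times> 'v) set \<Rightarrow> 'v set \<Rightarrow> 'v list \<Rightarrow> bool" where
  "blocked E C p \<longleftrightarrow> (\<exists>k. 0 < k \<and> Suc k < length p \<and>
     (if (p ! (k - 1), p ! k) \<in> E \<and> (p ! Suc k, p ! k) \<in> E
      then (\<forall>d. (p ! k, d) \<in> E\<^sup>* \<longrightarrow> d \<notin> C)
      else p ! k \<in> C))"

definition dsep :: "('v \<times> 'v) set \<Rightarrow> 'v set \<Rightarrow> 'v set \<Rightarrow> 'v set \<Rightarrow> bool" where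
  "dsep E A B C \<longleftrightarrow> (\<forall>p. upath E p \<and> hd p \<in> A \<and> last p \<in> B \<longrightarrow> blocked E C p)"

definition gen_sigma :: "'w measure \<Rightarrow> ('v \<Rightarrow> 'w \<Rightarrow> real) \<Rightarrow> 'v set \<Rightarrow> 'w measure" where
  "gen_sigma M val C = sigma (space M) {val c -` B \<inter> space M | c B. c \<in> C \<and> B \<in> sets borel}"

definition cond_indep ::
  "'w measure \<Rightarrow> ('v \<Rightarrow> 'w \<Rightarrow> real) \<Rightarrow> 'v set \<Rightarrow> 'v set \<Rightarrow> 'v set \<Rightarrow> bool" where
  "cond_indep M val A B C \<longleftrightarrow>
     (\<forall>P\<in>sets (gen_sigma M val A). \<forall>Q\<in>sets (gen_sigma M val B).
        AE \<omega> in M. real_cond_exp M (gen_sigma M val C) (indicator (P \<inter> Q)) \<omega> =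
          real_cond_exp M (gen_sigma M val C) (indicator P) \<omega> *
          real_cond_exp M (gen_sigma M val C) (indicator Q) \<omega>)"

definition CFC :: "'w measure \<Rightarrow> 'v set \<Rightarrow> ('v \<times> 'v) set \<Rightarrow> ('v \<Rightarrow> 'w \<Rightarrow> real) \<Rightarrow> bool" where
  "CFC M V E val \<longleftrightarrow>
     (\<forall>A B C. A \<subseteq> V \<and> B \<subseteq> V \<and> C \<subseteq> V \<and> A \<noteq> {} \<and> B \<noteq> {} \<and>
        A \<inter> B = {} \<and> A \<inter> C = {} \<and> B \<inter> C = {} \<and> cond_indep M val A B C
        \<longrightarrow> dsep E A B C)"

definition UCP :: "('v \<times> 'v) set \<Rightarrow> 'v set \<Rightarrow> 'v \<Rightarrow> 'v \<Rightarrow> bool" where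
  "UCP E X' i j \<longleftrightarrow> (\<exists>p. dpath E p \<and> length p \<ge> 2 \<and> hd p = i \<and> last p = j \<and>
                          p ! (length p - 2) \<notin> X')"

text \<open>UBP between i and j w.r.t. X': i <- v_k <- ... <- v -> ... -> v_l -> j, v_k, v_l not in X',
  as a path with distinct vertices: directed paths p (from v to i) and q (from v to j)
  sharing only their start vertex v.\<close>
definition UBP :: "('v \<times> 'v) set \<Rightarrow> 'v set \<Rightarrow> 'v \<Rightarrow> 'v \<Rightarrow> bool" where
  "UBP E X' i j \<longleftrightarrow> (\<exists>p q. dpath E p \<and> dpath E q \<and> length p \<ge> 2 \<and> length q \<ge> 2 \<and>
      hd p = hd q \<and> last p = i \<and> last q = j \<and> distinct (p @ tl q) \<and>
      p ! (length p - 2) \<notin> X' \<and> q ! (length q - 2) \<notin> X')"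

definition invisible :: "('v \<times> 'v) set \<Rightarrow> 'v set \<Rightarrow> 'v \<Rightarrow> 'v \<Rightarrow> bool" where
  "invisible E X' i j \<longleftrightarrow> UBP E X' i j \<or> UBP E X' j i \<or> UCP E X' i j \<or> UCP E X' j i"

definition visible_parent :: "('v \<times> 'v) set \<Rightarrow> 'v set \<Rightarrow> 'v \<Rightarrow> 'v \<Rightarrow> bool" where
  "visible_parent E X' i j \<longleftrightarrow> (j, i) \<in> E \<and> \<not> invisible E X' i j"

definition visible_nonedge :: "('v \<times> 'v) set \<Rightarrow> 'v set \<Rightarrow> 'v \<Rightarrow> 'v \<Rightarrow> bool" where
  "visible_nonedge E X' i j \<longleftrightarrow> (i, j) \<notin> E \<and> (j, i) \<notin> E \<and> \<not> invisible E X' i j"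

subsection \<open>Standing facts (F1)-(F3), taken as known\<close>

definition standing_facts ::
  "'w measure \<Rightarrow> 'v set \<Rightarrow> ('v \<times> 'v) set \<Rightarrow> ('v \<Rightarrow> 'w \<Rightarrow> real)
    \<Rightarrow> ('v \<Rightarrow> real \<Rightarrow> real) set \<Rightarrow> bool" where
  "standing_facts M X E val GC \<longleftrightarrow>
     (\<forall>X'\<subseteq>X. \<forall>i\<in>X'. \<forall>j\<in>X'. i \<noteq> j \<longrightarrow>
       (visible_parent E X' i j \<longleftrightarrow>
          (\<forall>G1\<in>GC. \<forall>G2\<in>GC. \<forall>Ms\<subseteq>X' - {i, j}. \<forall>Ns\<subseteq>X' - {j}.
              \<not> rv_indep M (res val G1 i Ms) (res val G2 j Ns)) \<and>
          (\<exists>G1\<in>GC. \<exists>G2\<in>GC. \<exists>Ms\<subseteq>X' - {i}. \<exists>Ns\<subseteq>X' - {i, j}.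
              rv_indep M (res val G1 i Ms) (res val G2 j Ns))) \<and>
       (visible_nonedge E X' i j \<longleftrightarrow>
          (\<exists>G1\<in>GC. \<exists>G2\<in>GC. \<exists>Ms\<subseteq>X' - {i, j}. \<exists>Ns\<subseteq>X' - {i, j}.
              rv_indep M (res val G1 i Ms) (res val G2 j Ns))) \<and>
       (invisible E X' i j \<longleftrightarrow>
          (\<forall>Ms\<subseteq>X' - {i}. \<forall>Ns\<subseteq>X' - {j}. \<forall>G1\<in>GC. \<forall>G2\<in>GC.
              \<not> rv_indep M (res val G1 i Ms) (res val G2 j Ns))))"

end

theory Submission
  imports Defs
begin

text \<open>Condition (i) exhibits independent residuals in which x_i is regressed on x_j,
  condition (ii) independent residuals in which x_j is regressed on x_i. By (F3) the first
  makes the pair (x_i, x_j) visible; by (F1) the second rules out x_j being a visible parent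
  of x_i, and the first, with the roles swapped, rules out x_i being a visible parent of x_j.
  For x_k in K, condition (a) says by (F3) that the pair becomes invisible once x_k is
  treated as unobserved. A witnessing unobserved path w.r.t. X - {x_k} is not one w.r.t. X,
  so its last vertex before x_i or x_j is x_k, which is thus a parent of x_i or x_j.
  Faithfulness and the function-class property enter only through (F1)-(F3).\<close>

lemma (in prob_space) indep_set_commute:
  assumes "indep_set A B"
  shows "indep_set B A"
proof -
  have "prob (b \<inter> a) = prob b * prob a" if "a \<in> A" "b \<in> B" for a b
    using assms that unfolding indep_sets2_eq by (simp add: Int_commute mult.commute)
  then show ?thesis using assms unfolding indep_sets2_eq by blast
qed

lemma (in prob_space) indep_var_commute:
  assumes "indep_var S X T Y"
  shows "indep_var T Y S X"
  using assms indep_set_commute unfolding indep_var_eq by simp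

lemma rv_indep_commute:
  assumes "prob_space M" "rv_indep M A B"
  shows "rv_indep M B A"
  using assms prob_space.indep_var_commute unfolding rv_indep_def by blast

lemma dpath_last_edge:
  assumes "dpath E p" "length p \<ge> 2"
  shows "(p ! (length p - 2), last p) \<in> E"
proof -
  have "(p ! (length p - 2), p ! Suc (length p - 2)) \<in> E"
    using assms unfolding dpath_def by auto
  moreover have "Suc (length p - 2) = length p - 1" using assms(2) by arith
  moreover have "last p = p ! (length p - 1)" using assms(2) by (intro last_conv_nth) auto
  ultimately show ?thesis by simp
qed

lemma UCP_Diff_singleton:
  assumes "UCP E (X' - {k}) i j"
  shows "UCP E X' i j \<or> (k, j) \<in> E"
proof (rule disjCI)
  assume "(k, j) \<notin> E"
  obtain p where p: "dpath E p" "length p \<ge> 2" "hd p = i" "last p = j"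
      "p ! (length p - 2) \<notin> X' - {k}"
    using assms unfolding UCP_def by blast
  moreover have "p ! (length p - 2) \<noteq> k"
    using dpath_last_edge[OF p(1,2)] p(4) \<open>(k, j) \<notin> E\<close> by auto
  ultimately show "UCP E X' i j" unfolding UCP_def by blast
qed

lemma UBP_Diff_singleton:
  assumes "UBP E (X' - {k}) i j"
  shows "UBP E X' i j \<or> (k, i) \<in> E \<or> (k, j) \<in> E"
proof (rule disjCI)
  assume no_edge: "\<not> ((k, i) \<in> E \<or> (k, j) \<in> E)"
  obtain p q where pq: "dpath E p" "dpath E q" "length p \<ge> 2" "length q \<ge> 2"
      "hd p = hd q" "last p = i" "last q = j" "distinct (p @ tl q)"
      "p ! (length p - 2) \<notin> X' - {k}" "q ! (length q - 2) \<notin> X' - {k}"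
    using assms unfolding UBP_def by blast
  have "p ! (length p - 2) \<noteq> k" "q ! (length q - 2) \<noteq> k"
    using dpath_last_edge[OF pq(1,3)] dpath_last_edge[OF pq(2,4)] pq(6,7) no_edge by auto
  with pq show "UBP E X' i j" unfolding UBP_def by blast
qed

lemma invisible_Diff_singleton:
  assumes "invisible E (X' - {k}) i j"
  shows "invisible E X' i j \<or> (k, i) \<in> E \<or> (k, j) \<in> E"
  using assms UCP_Diff_singleton[of E X' k i j] UCP_Diff_singleton[of E X' k j i]
    UBP_Diff_singleton[of E X' k i j] UBP_Diff_singleton[of E X' k j i]
  unfolding invisible_def by blast

lemma visible_nonedgeI:
  assumes "\<not> invisible E X' i j" "\<not> visible_parent E X' i j" "\<not> visible_parent E X' j i"
  shows "visible_nonedge E X' i j"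
  using assms unfolding visible_nonedge_def visible_parent_def invisible_def by blast

context
  fixes M X E val GC
  assumes facts: "standing_facts M X E val GC"
begin

lemma invisible_iff_residuals_dependent:
  assumes "X' \<subseteq> X" "i \<in> X'" "j \<in> X'" "i \<noteq> j"
  shows "invisible E X' i j \<longleftrightarrow> (\<forall>Ms\<subseteq>X' - {i}. \<forall>Ns\<subseteq>X' - {j}. \<forall>G1\<in>GC. \<forall>G2\<in>GC.
           \<not> rv_indep M (res val G1 i Ms) (res val G2 j Ns))"
  using facts assms unfolding standing_facts_def by meson

lemma not_visible_parent_if_residuals_indep:
  assumes "X' \<subseteq> X" "i \<in> X'" "j \<in> X'" "i \<noteq> j" "G1 \<in> GC" "G2 \<in> GC"
    "Ms \<subseteq> X' - {i, j}" "Ns \<subseteq> X' - {j}" "rv_indep M (res val G1 i Ms) (res val G2 j Ns)"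
  shows "\<not> visible_parent E X' i j"
proof -
  have "visible_parent E X' i j \<Longrightarrow> (\<forall>G1\<in>GC. \<forall>G2\<in>GC. \<forall>Ms\<subseteq>X' - {i, j}. \<forall>Ns\<subseteq>X' - {j}.
          \<not> rv_indep M (res val G1 i Ms) (res val G2 j Ns))"
    using facts assms(1-4) unfolding standing_facts_def by meson
  with assms(5-) show ?thesis by blast
qed

end

theorem lemma10:
  fixes M :: "'w measure" and V X :: "'v set" and E :: "('v \<times> 'v) set"
    and val noise :: "'v \<Rightarrow> 'w \<Rightarrow> real" and f :: "'v \<Rightarrow> 'v \<Rightarrow> real \<Rightarrow> real"
    and GC :: "('v \<Rightarrow> real \<Rightarrow> real) set"
    and i j :: 'v and K :: "'v set"
  assumes model: "anm_model M V X E val noise f"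
    and faithful: "CFC M V E val"
    and gclass: "gclass_ok M V X val noise GC"
    and facts: "standing_facts M X E val GC"
    and ij: "i \<in> X" "j \<in> X" "i \<noteq> j"
    and K: "K \<subseteq> X - {i, j}"
    and hi: "\<exists>G1\<in>GC. \<exists>G2\<in>GC. \<exists>Ms\<subseteq>X - {i, j}. \<exists>Ns\<subseteq>X - {i, j}.
               rv_indep M (res val G1 i (Ms \<union> {j})) (res val G2 j Ns)"
    and hii: "\<exists>G1\<in>GC. \<exists>G2\<in>GC. \<exists>Ms\<subseteq>X - {i, j}. \<exists>Ns\<subseteq>X - {i, j}.
               rv_indep M (res val G1 i Ms) (res val G2 j (Ns \<union> {i}))"
    and ha: "\<forall>k\<in>K. \<forall>Ms\<subseteq>X - {i, k}. \<forall>Ns\<subseteq>X - {j, k}. \<forall>G1\<in>GC. \<forall>G2\<in>GC.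
               \<not> rv_indep M (res val G1 i Ms) (res val G2 j Ns)"
  shows "visible_nonedge E X i j \<and> (\<forall>k\<in>K. (k, i) \<in> E \<or> (k, j) \<in> E)"
proof -
  have "prob_space M" using model unfolding anm_model_def by simp
  obtain G1 G2 Ms Ns where G: "G1 \<in> GC" "G2 \<in> GC" "Ms \<union> {j} \<subseteq> X - {i}" "Ns \<subseteq> X - {j, i}"
    and indep_i: "rv_indep M (res val G1 i (Ms \<union> {j})) (res val G2 j Ns)"
    using hi ij by blast
  obtain H1 H2 Ms' Ns' where H: "H1 \<in> GC" "H2 \<in> GC" "Ms' \<subseteq> X - {i, j}" "Ns' \<union> {i} \<subseteq> X - {j}"
    and indep_ii: "rv_indep M (res val H1 i Ms') (res val H2 j (Ns' \<union> {i}))"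
    using hii ij by blast
  have visible: "\<not> invisible E X i j"
    using invisible_iff_residuals_dependent[OF facts order.refl ij] G indep_i by blast
  have "visible_nonedge E X i j"
  proof (rule visible_nonedgeI[OF visible])
    show "\<not> visible_parent E X i j"
      by (rule not_visible_parent_if_residuals_indep[OF facts order.refl ij H indep_ii])
    show "\<not> visible_parent E X j i"
      by (rule not_visible_parent_if_residuals_indep[OF facts order.refl ij(2,1)
            ij(3)[symmetric] G(2,1,4,3) rv_indep_commute[OF \<open>prob_space M\<close> indep_i]])
  qed
  moreover have "(k, i) \<in> E \<or> (k, j) \<in> E" if "k \<in> K" for k
  proof -
    have "i \<in> X - {k}" "j \<in> X - {k}" using K ij that by auto
    moreover have "\<forall>Ms\<subseteq>X - {k} - {i}. \<forall>Ns\<subseteq>X - {k} - {j}. \<forall>G1\<in>GC. \<forall>G2\<in>GC.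
        \<not> rv_indep M (res val G1 i Ms) (res val G2 j Ns)"
      using ha that by (simp add: Diff_insert2[symmetric] insert_commute)
    ultimately have "invisible E (X - {k}) i j"
      using invisible_iff_residuals_dependent[OF facts Diff_subset _ _ ij(3)] by simp
    with visible show ?thesis by (meson invisible_Diff_singleton)
  qed
  ultimately show ?thesis by blast
qed

end
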